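(* Let $X$ be a real Banach space, $\tau$ the norm or weak topology, and $Y$ a (closed linear) subspace of $X$ such that $(X,Y,\mathcal{F}(X))$ has $\tau$-$\mathscr{F}_{cwm}$-SACP. Then for every $N\in\mathbb{N}$ and every $f:[0,\infty)^N\to[0,\infty)$ in $\mathscr{F}_{cwm}$, the set-valued map $\mathrm{Cent}_Y^f:(\mathcal{F}_N(X),d)\to\mathcal{CB}(Y)$ is metric-$\tau$ upper semicontinuous, i.e., for every $F\in\mathcal{F}_N(X)$ and every $\tau$-open set $W\supseteq\mathrm{Cent}_Y^f(F)$ there is a $d$-open set $U\ni F$ with $\mathrm{Cent}_Y^f(G)\subseteq W$ for all $G\in U$.
   Context: $\mathcal{F}(X)$ is the family of nonempty finite subsets of $X$; $\mathcal{F}_N(X)$ the subsets of cardinality $N$, each written with a fixed enumeration $\{x_1,\dots,x_N\}$, with metric $d(F_1,F_2)=\max_i\|x_i-x_i'\|$. $\mathcal{CB}(Y)$ denotes the closed bounded subsets of $Y$. $\mathscr{F}_{cwm}$ is the class of convex functions $f:[0,\infty)^N\to[0,\infty)$ ($N\in\mathbb{N}$) that are monotone ($a\le b$ coordinatewise implies $f(a)\le f(b)$) and weakly strictly monotone ($a_i<b_i$ for all $i$ implies $f(a)<f(b)$). For $F=\{x_1,\dots,x_N\}$: $r_f(y,F)=f(\|y-x_1\|,\dots,\|y-x_N\|)$, $\mathrm{rad}_Y^f(F)=\inf_{y\in Y}r_f(y,F)$, $\mathrm{Cent}_Y^f(F)=\{y\in Y:r_f(y,F)=\mathrm{rad}_Y^f(F)\}$.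 $(X,Y,\mathcal{F}(X))$ has $\tau$-$\mathscr{F}_{cwm}$-SACP if for every $F\in\mathcal{F}(X)$, every $f\in\mathscr{F}_{cwm}$ on $[0,\infty)^{card(F)}$ and every sequence $(y_n)\subseteq Y$ with $r_f(y_n,F)\to\mathrm{rad}_Y^f(F)$, $(y_n)$ has a $\tau$-convergent subsequence. *)

theory Defs
  imports "HOL-Analysis.Analysis"
begin

text \<open>Points of [0,inf)^N are represented as functions nat => real which are
  nonnegative on indices i < N and vanish at indices i >= N.\<close>
definition nonneg_orthant :: "nat \<Rightarrow> (nat \<Rightarrow> real) set" where
  "nonneg_orthant N = {a. (\<forall>i<N. 0 \<le> a i) \<and> (\<forall>i\<ge>N. a i = 0)}"

definition cwm :: "nat \<Rightarrow> ((nat \<Rightarrow> real) \<Rightarrow> real) \<Rightarrow> bool" where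
  "cwm N f \<longleftrightarrow>
     (\<forall>a\<in>nonneg_orthant N. 0 \<le> f a) \<and>
     (\<forall>a\<in>nonneg_orthant N. \<forall>b\<in>nonneg_orthant N. \<forall>t::real. 0 \<le> t \<and> t \<le> 1 \<longrightarrow>
        f (\<lambda>i. t * a i + (1 - t) * b i) \<le> t * f a + (1 - t) * f b) \<and>
     (\<forall>a\<in>nonneg_orthant N. \<forall>b\<in>nonneg_orthant N. (\<forall>i<N. a i \<le> b i) \<longrightarrow> f a \<le> f b) \<and>
     (\<forall>a\<in>nonneg_orthant N. \<forall>b\<in>nonneg_orthant N. (\<forall>i<N. a i < b i) \<longrightarrow> f a < f b)"

text \<open>A finite set F = {x_1,...,x_N} of cardinality N with its fixed enumeration
  is represented by x :: nat => 'a, injective on {..<N} (indices 0..N-1).\<close>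
definition r_f :: "((nat \<Rightarrow> real) \<Rightarrow> real) \<Rightarrow> nat \<Rightarrow> (nat \<Rightarrow> 'a::real_normed_vector) \<Rightarrow> 'a \<Rightarrow> real" where
  "r_f f N x y = f (\<lambda>i. if i < N then norm (y - x i) else 0)"

definition rad_f :: "'a::real_normed_vector set \<Rightarrow> ((nat \<Rightarrow> real) \<Rightarrow> real) \<Rightarrow> nat \<Rightarrow> (nat \<Rightarrow> 'a) \<Rightarrow> real" where
  "rad_f Y f N x = (INF y\<in>Y. r_f f N x y)"

definition Cent_f :: "'a::real_normed_vector set \<Rightarrow> ((nat \<Rightarrow> real) \<Rightarrow> real) \<Rightarrow> nat \<Rightarrow> (nat \<Rightarrow> 'a) \<Rightarrow> 'a set" where
  "Cent_f Y f N x = {y\<in>Y. r_f f N x y = rad_f Y f N x}"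

definition weak_topology :: "'a::real_normed_vector topology" where
  "weak_topology = topology_generated_by {{x. l x \<in> U} | l U. bounded_linear (l :: 'a \<Rightarrow> real) \<and> open U}"

definition SACP_cwm :: "'a::real_normed_vector topology \<Rightarrow> 'a set \<Rightarrow> bool" where
  "SACP_cwm \<tau> Y \<longleftrightarrow>
     (\<forall>N x f (y :: nat \<Rightarrow> 'a). N \<ge> 1 \<and> inj_on x {..<N} \<and> cwm N f \<and> (\<forall>n. y n \<in> Y) \<and>
        (\<lambda>n. r_f f N x (y n)) \<longlonglongrightarrow> rad_f Y f N x \<longrightarrow>
        (\<exists>r l. strict_mono r \<and> limitin \<tau> (y \<circ> r) l sequentially))"

end

theory Submission
  imports Defs
begin

text \<open>If the conclusion fails at \<open>x\<close>, there are configurations \<open>X n\<close> converging to \<open>x\<close> and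
  centres \<open>y n \<in> Cent(X n)\<close> outside \<open>W\<close>. Linear growth of \<open>f\<close> keeps the \<open>y n\<close> bounded, and
  the convexity estimate \<open>f a \<le> f b + d * f (a + 1)\<close> for \<open>a \<le> b + d\<close> then shows that
  \<open>r_f(x, y n) \<rightarrow> rad(x)\<close>, i.e. \<open>y\<close> is a minimising sequence for \<open>x\<close>. The SACP yields a
  \<open>\<tau>\<close>-convergent, hence weakly convergent, subsequence. Its limit lies in \<open>Y\<close>, as closed
  subspaces are weakly closed, and is a centre of \<open>x\<close>, as \<open>r_f(x, -)\<close> is weakly lower
  semicontinuous; both facts rest on the Hahn-Banach theorem. So the limit lies in the
  \<open>\<tau>\<close>-open set \<open>W\<close>, and hence so does some \<open>y n\<close>, a contradiction.\<close>

section \<open>Hahn-Banach theorem for seminorms\<close>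

definition seminorm :: "('a::real_vector \<Rightarrow> real) \<Rightarrow> bool" where
  "seminorm p \<longleftrightarrow> (\<forall>u w. p (u + w) \<le> p u + p w) \<and> (\<forall>c u. p (c *\<^sub>R u) = \<bar>c\<bar> * p u)"

lemma seminorm_zero: "seminorm p \<Longrightarrow> p 0 = 0"
  unfolding seminorm_def by (metis abs_zero mult_zero_left scaleR_zero_left)

lemma seminorm_nonneg:
  assumes "seminorm p" shows "0 \<le> p u"
proof -
  have "p 0 \<le> p u + p ((- 1) *\<^sub>R u)"
    using assms unfolding seminorm_def by (metis add.right_inverse scaleR_minus1_left)
  moreover have "p ((- 1) *\<^sub>R u) = p u" using assms unfolding seminorm_def by (metis abs_neg_one mult_1)
  ultimately show ?thesis using seminorm_zero[OF assms] by simp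
qed

text \<open>A partial linear functional dominated by \<^term>\<open>p\<close>, represented by its graph.\<close>

definition dominated_graph :: "('a::real_vector \<Rightarrow> real) \<Rightarrow> ('a \<times> real) set \<Rightarrow> bool" where
  "dominated_graph p G \<longleftrightarrow> subspace G \<and> (\<forall>(a, s)\<in>G. s \<le> p a)"

lemma dominated_graph_single_valued:
  assumes p: "seminorm p" and G: "dominated_graph p G" and "(a, s) \<in> G" "(a, t) \<in> G"
  shows "s = t"
proof -
  have "(0, s - t) \<in> G" "(0, t - s) \<in> G"
    using G assms(3,4) subspace_diff[of G] unfolding dominated_graph_def by force+
  then have "s - t \<le> 0" "t - s \<le> 0"
    using G seminorm_zero[OF p] unfolding dominated_graph_def by auto
  then show ?thesis by simp
qed

lemma dominated_graph_gap:
  assumes p: "seminorm p" and G: "dominated_graph p G"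
  obtains r where "\<And>a s. (a, s) \<in> G \<Longrightarrow> r \<le> p (a + w) - s"
    and "\<And>b t. (b, t) \<in> G \<Longrightarrow> t - p (b - w) \<le> r"
proof -
  define S where "S = {p (a + w) - s | a s. (a, s) \<in> G}"
  have sep: "t - p (b - w) \<le> p (a + w) - s" if "(a, s) \<in> G" "(b, t) \<in> G" for a s b t
  proof -
    have "s + t \<le> p (a + b)"
      using G subspace_add[of G, OF _ that] unfolding dominated_graph_def by auto
    also have "\<dots> = p ((a + w) + (b - w))" by simp
    also have "\<dots> \<le> p (a + w) + p (b - w)"
      using p unfolding seminorm_def by blast
    finally show ?thesis by simp
  qed
  have "(0, 0) \<in> G" using G subspace_0[of G] unfolding dominated_graph_def by (simp add: zero_prod_def)
  then have "S \<noteq> {}" "bdd_below S"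
    unfolding S_def bdd_below_def using sep by blast+
  then show ?thesis
    using sep by (intro that[of "Inf S"]) (auto simp: S_def intro!: cInf_lower cInf_greatest)
qed

lemma dominated_graph_extension_value:
  assumes p: "seminorm p" and G: "dominated_graph p G"
  obtains r where "\<And>a s c. (a, s) \<in> G \<Longrightarrow> s + c * r \<le> p (a + c *\<^sub>R w)"
proof -
  obtain r where r_upper: "\<And>a s. (a, s) \<in> G \<Longrightarrow> r \<le> p (a + w) - s"
    and r_lower: "\<And>b t. (b, t) \<in> G \<Longrightarrow> t - p (b - w) \<le> r"
    using dominated_graph_gap[OF p G, where w = w] by blast
  have G_sub: "subspace G" and G_le: "\<forall>(a, s)\<in>G. s \<le> p a"
    using G unfolding dominated_graph_def by auto
  have hom: "p (c *\<^sub>R u) = \<bar>c\<bar> * p u" for c u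
    using p unfolding seminorm_def by blast
  \<comment> \<open>rescale \<open>(a, s)\<close> by \<open>1 / \<bar>c\<bar>\<close> and use the bound on \<open>r\<close> matching the sign of \<open>c\<close>\<close>
  have "s + c * r \<le> p (a + c *\<^sub>R w)" if as: "(a, s) \<in> G" for a s c
  proof (cases c "0::real" rule: linorder_cases)
    case less
    have "(inverse (- c) *\<^sub>R a, inverse (- c) * s) \<in> G"
      using subspace_scale[OF G_sub as, of "inverse (- c)"] by simp
    from r_lower[OF this] have "- c * (inverse (- c) * s - p (inverse (- c) *\<^sub>R a - w)) \<le> - c * r"
      using less by (intro mult_left_mono) auto
    moreover have "- c * p (inverse (- c) *\<^sub>R a - w) = p (a + c *\<^sub>R w)"
      using hom[of "- c" "inverse (- c) *\<^sub>R a - w"] less by (simp add: algebra_simps)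
    ultimately show ?thesis using less by (simp add: algebra_simps)
  next
    case equal
    then show ?thesis using G_le as by auto
  next
    case greater
    have "(inverse c *\<^sub>R a, inverse c * s) \<in> G"
      using subspace_scale[OF G_sub as, of "inverse c"] by simp
    from r_upper[OF this] have "c * r \<le> c * (p (inverse c *\<^sub>R a + w) - inverse c * s)"
      using greater by (intro mult_left_mono) auto
    moreover have "c * p (inverse c *\<^sub>R a + w) = p (a + c *\<^sub>R w)"
      using hom[of c "inverse c *\<^sub>R a + w"] greater by (simp add: algebra_simps)
    ultimately show ?thesis using greater by (simp add: right_diff_distrib mult.assoc[symmetric])
  qed
  then show ?thesis by (rule that)
qed

lemma dominated_graph_extend:
  assumes p: "seminorm p" and G: "dominated_graph p G"
  shows "\<exists>G'. dominated_graph p G' \<and> G \<subseteq> G' \<and> w \<in> fst ` G'"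
proof -
  obtain r where r: "\<And>a s c. (a, s) \<in> G \<Longrightarrow> s + c * r \<le> p (a + c *\<^sub>R w)"
    using dominated_graph_extension_value[OF p G, where w = w] by blast
  define G' where "G' = span (insert (w, r) G)"
  have "s \<le> p a" if "(a, s) \<in> G'" for a s
  proof -
    obtain c where "(a - c *\<^sub>R w, s - c * r) \<in> G"
      using \<open>(a, s) \<in> G'\<close> G unfolding G'_def span_breakdown_eq dominated_graph_def
      by (auto simp: span_eq_iff[THEN iffD2])
    from r[OF this, of c] show ?thesis by simp
  qed
  then have "dominated_graph p G'"
    unfolding dominated_graph_def G'_def by auto
  moreover have "G \<subseteq> G'" "(w, r) \<in> G'"
    unfolding G'_def by (auto intro: span_base)
  ultimately show ?thesis by force
qed

lemma subspace_Union_chain: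
  assumes "C \<noteq> {}" "\<forall>S\<in>C. subspace S" "\<forall>S\<in>C. \<forall>T\<in>C. S \<subseteq> T \<or> T \<subseteq> S"
  shows "subspace (\<Union>C)"
  unfolding subspace_def
proof (intro conjI ballI allI)
  show "0 \<in> \<Union>C" using assms(1,2) subspace_0 by blast
  show "c *\<^sub>R x \<in> \<Union>C" if "x \<in> \<Union>C" for c x
    using that assms(2) subspace_scale by blast
  show "x + y \<in> \<Union>C" if xy: "x \<in> \<Union>C" "y \<in> \<Union>C" for x y
  proof -
    obtain S T where "S \<in> C" "T \<in> C" "x \<in> S" "y \<in> T" using xy by blast
    then show ?thesis using assms(2,3) subspace_add by (metis UnionI subset_iff)
  qed
qed

theorem hahn_banach_seminorm:
  assumes p: "seminorm p"
  shows "\<exists>h. linear h \<and> (\<forall>u. h u \<le> p u) \<and> h v = p v"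
proof -
  define A where "A = {G. dominated_graph p G \<and> (v, p v) \<in> G}"
  have "span {(v, p v)} \<in> A"
  proof -
    have "k * p v \<le> p (k *\<^sub>R v)" for k
      using p seminorm_nonneg[OF p, of v] unfolding seminorm_def by (simp add: mult_right_mono)
    then have "\<forall>(a, s)\<in>span {(v, p v)}. s \<le> p a" unfolding span_singleton by auto
    then show ?thesis unfolding A_def dominated_graph_def by (auto intro: span_base)
  qed
  moreover have "\<Union>C \<in> A" if "C \<noteq> {}" "subset.chain A C" for C
    using that subspace_Union_chain[of C] unfolding A_def dominated_graph_def subset_chain_def by fast
  ultimately obtain M where M: "dominated_graph p M" "(v, p v) \<in> M"
    and max: "\<And>G. dominated_graph p G \<Longrightarrow> M \<subseteq> G \<Longrightarrow> G = M"
    using subset_Zorn_nonempty[of A] unfolding A_def by blast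
  have total: "\<exists>s. (u, s) \<in> M" for u
  proof -
    obtain G where "dominated_graph p G" "M \<subseteq> G" "u \<in> fst ` G"
      using dominated_graph_extend[OF p M(1)] by blast
    with max show ?thesis by fastforce
  qed
  define h where "h u = (THE s. (u, s) \<in> M)" for u
  have unique: "s = t" if "(u, s) \<in> M" "(u, t) \<in> M" for u s t
    using dominated_graph_single_valued[OF p M(1) that] .
  have hM: "(u, h u) \<in> M" for u
    unfolding h_def using total[of u] unique by (metis theI)
  have M_sub: "subspace M" using M(1) unfolding dominated_graph_def by blast
  have "h (x + y) = h x + h y" for x y
    using subspace_add[OF M_sub hM[of x] hM[of y]] by (auto intro: unique[OF hM])
  moreover have "h (c *\<^sub>R x) = c * h x" for c x
    using subspace_scale[OF M_sub hM[of x], of c] by (auto intro: unique[OF hM])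
  ultimately have "linear h" by (simp add: linear_iff)
  moreover have "\<forall>u. h u \<le> p u" using M(1) hM unfolding dominated_graph_def by fast
  ultimately show ?thesis using unique[OF hM M(2)] by blast
qed

lemma infdist_greatest: "A \<noteq> {} \<Longrightarrow> (\<And>a. a \<in> A \<Longrightarrow> c \<le> dist x a) \<Longrightarrow> c \<le> infdist x A"
  by (simp add: infdist_notempty cINF_greatest)

lemma infdist_subspace_add:
  fixes Y :: "'a::real_normed_vector set"
  assumes Y: "subspace Y"
  shows "infdist (u + w) Y \<le> infdist u Y + infdist w Y"
proof -
  have Yne: "Y \<noteq> {}" using subspace_0[OF Y] by blast
  have "infdist (u + w) Y - dist w b \<le> infdist u Y" if b: "b \<in> Y" for b
  proof (rule infdist_greatest[OF Yne])
    fix a assume "a \<in> Y"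
    then have "infdist (u + w) Y \<le> dist (u + w) (a + b)"
      using b Y by (simp add: infdist_le subspace_add)
    also have "\<dots> \<le> dist u a + dist w b"
      unfolding dist_norm using norm_triangle_ineq[of "u - a" "w - b"] by (simp add: algebra_simps)
    finally show "infdist (u + w) Y - dist w b \<le> dist u a" by simp
  qed
  then have "infdist (u + w) Y - infdist u Y \<le> infdist w Y"
    by (intro infdist_greatest[OF Yne]) (simp add: algebra_simps)
  then show ?thesis by simp
qed

lemma infdist_subspace_scale_le:
  fixes Y :: "'a::real_normed_vector set"
  assumes Y: "subspace Y"
  shows "infdist (c *\<^sub>R u) Y \<le> \<bar>c\<bar> * infdist u Y"
proof (cases "c = 0")
  case True
  then show ?thesis using subspace_0[OF Y] by simp
next
  case False
  have "infdist (c *\<^sub>R u) Y / \<bar>c\<bar> \<le> infdist u Y"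
  proof (rule infdist_greatest)
    show "Y \<noteq> {}" using subspace_0[OF Y] by blast
    fix a assume "a \<in> Y"
    then have "infdist (c *\<^sub>R u) Y \<le> dist (c *\<^sub>R u) (c *\<^sub>R a)"
      using Y by (simp add: infdist_le subspace_scale)
    also have "\<dots> = \<bar>c\<bar> * dist u a"
      by (simp add: dist_norm scaleR_diff_right[symmetric])
    finally show "infdist (c *\<^sub>R u) Y / \<bar>c\<bar> \<le> dist u a"
      using False by (simp add: divide_le_eq mult.commute)
  qed
  then show ?thesis using False by (simp add: divide_le_eq mult.commute)
qed

lemma seminorm_infdist_subspace:
  fixes Y :: "'a::real_normed_vector set"
  assumes Y: "subspace Y"
  shows "seminorm (\<lambda>u. infdist u Y)"
proof -
  have "infdist (c *\<^sub>R u) Y = \<bar>c\<bar> * infdist u Y" for c u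
  proof (cases "c = 0")
    case True
    then show ?thesis using subspace_0[OF Y] by simp
  next
    case False
    have "infdist u Y \<le> \<bar>inverse c\<bar> * infdist (c *\<^sub>R u) Y"
      using infdist_subspace_scale_le[OF Y, of "inverse c" "c *\<^sub>R u"] False by simp
    then have "\<bar>c\<bar> * infdist u Y \<le> infdist (c *\<^sub>R u) Y"
      using False by (simp add: field_simps)
    then show ?thesis using infdist_subspace_scale_le[OF Y, of c u] by simp
  qed
  then show ?thesis unfolding seminorm_def using infdist_subspace_add[OF Y] by blast
qed

theorem hahn_banach_infdist:
  fixes Y :: "'a::real_normed_vector set"
  assumes Y: "subspace Y"
  shows "\<exists>h. bounded_linear h \<and> (\<forall>u. h u \<le> infdist u Y) \<and> h v = infdist v Y"
proof -
  obtain h where h: "linear h" "\<forall>u. h u \<le> infdist u Y" "h v = infdist v Y"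
    using hahn_banach_seminorm[OF seminorm_infdist_subspace[OF Y]] by blast
  have le_norm: "h u \<le> norm u" for u
  proof -
    have "h u \<le> infdist u Y" using h(2) by blast
    also have "\<dots> \<le> norm u" using infdist_le[OF subspace_0[OF Y], of u] by simp
    finally show ?thesis .
  qed
  have "bounded_linear h"
  proof (rule bounded_linear_intro[where K = 1])
    show "h (x + y) = h x + h y" "h (r *\<^sub>R x) = r *\<^sub>R h x" for x y r
      using h(1) by (simp_all add: linear_add linear_scale)
    show "norm (h x) \<le> norm x * 1" for x
      using le_norm[of x] le_norm[of "- x"] linear_neg[OF h(1), of x] by auto
  qed
  with h show ?thesis by blast
qed

corollary norming_functional:
  fixes v :: "'a::real_normed_vector"
  shows "\<exists>h. bounded_linear h \<and> (\<forall>u. h u \<le> norm u) \<and> h v = norm v"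
  using hahn_banach_infdist[OF subspace_single_0, of v] by simp

corollary separating_functional_closed_subspace:
  fixes Y :: "'a::real_normed_vector set"
  assumes Y: "subspace Y" "closed Y" and l: "l \<notin> Y"
  shows "\<exists>h :: 'a \<Rightarrow> real. bounded_linear h \<and> (\<forall>y\<in>Y. h y = 0) \<and> h l \<noteq> 0"
proof -
  obtain h where h: "bounded_linear h" "\<forall>u. h u \<le> infdist u Y" "h l = infdist l Y"
    using hahn_banach_infdist[OF Y(1)] by blast
  have "h y = 0" if "y \<in> Y" for y
  proof -
    have "h y \<le> 0" "h (- y) \<le> 0"
      using h(2)[rule_format, of y] h(2)[rule_format, of "- y"] that subspace_neg[OF Y(1) that]
      by simp_all
    then show ?thesis using linear_neg[OF bounded_linear.linear[OF h(1)]] by force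
  qed
  moreover have "h l \<noteq> 0"
    using h(3) infdist_pos_not_in_closed[OF Y(2) _ l] subspace_0[OF Y(1)] by (metis empty_iff less_irrefl)
  ultimately show ?thesis using h(1) by blast
qed

section \<open>The weak topology\<close>

lemma openin_weak_topology_functional:
  fixes \<phi> :: "'a::real_normed_vector \<Rightarrow> real"
  assumes "bounded_linear \<phi>" "open U"
  shows "openin weak_topology {x. \<phi> x \<in> U}"
  unfolding weak_topology_def using assms by (intro topology_generated_by_Basis) blast

lemma topspace_weak_topology: "topspace weak_topology = UNIV"
proof -
  have "openin weak_topology (UNIV :: 'a::real_normed_vector set)"
    using openin_weak_topology_functional[OF bounded_linear_zero open_UNIV] by simp
  then show ?thesis using openin_subset by blast
qed

lemma open_if_openin_weak_topology:
  "openin weak_topology U \<Longrightarrow> open (U :: 'a::real_normed_vector set)"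
  unfolding weak_topology_def openin_topology_generated_by_iff
proof (induction rule: generate_topology_on.induct)
  case (Basis s)
  then show ?case
    using open_vimage[OF _ linear_continuous_on] by (auto simp: vimage_def)
qed auto

lemma limitin_weak_topology_if_tendsto:
  "(g \<longlongrightarrow> l) F \<Longrightarrow> limitin weak_topology g l F"
  by (simp add: limitin_def topspace_weak_topology open_if_openin_weak_topology topological_tendstoD)

lemma limitin_weak_topology_functional:
  fixes \<phi> :: "'a::real_normed_vector \<Rightarrow> real"
  assumes "limitin weak_topology g l F" "bounded_linear \<phi>"
  shows "((\<lambda>n. \<phi> (g n)) \<longlongrightarrow> \<phi> l) F"
proof (rule topological_tendstoI)
  fix S assume "open S" "\<phi> l \<in> S"
  then have "eventually (\<lambda>n. g n \<in> {x. \<phi> x \<in> S}) F"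
    using assms(1) openin_weak_topology_functional[OF assms(2)] unfolding limitin_def by blast
  then show "eventually (\<lambda>n. \<phi> (g n) \<in> S) F" by simp
qed

lemma weak_limit_in_closed_subspace:
  assumes Y: "subspace Y" "closed Y" and F: "F \<noteq> bot"
    and g: "eventually (\<lambda>n. g n \<in> Y) F" and lim: "limitin weak_topology g l F"
  shows "l \<in> Y"
proof (rule ccontr)
  assume "l \<notin> Y"
  then obtain h :: "'a \<Rightarrow> real" where h: "bounded_linear h" "\<forall>y\<in>Y. h y = 0" "h l \<noteq> 0"
    using separating_functional_closed_subspace[OF Y] by blast
  have "((\<lambda>n. h (g n)) \<longlongrightarrow> h l) F"
    using limitin_weak_topology_functional[OF lim h(1)] .
  moreover have "eventually (\<lambda>n. h (g n) = 0) F"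
    using g h(2) by (auto elim: eventually_mono)
  then have "((\<lambda>n. h (g n)) \<longlongrightarrow> 0) F"
    by (rule tendsto_eventually)
  ultimately show False using tendsto_unique[OF F] h(3) by blast
qed

lemma weak_limit_norm_lower:
  assumes lim: "limitin weak_topology g l F" and e: "e > 0"
  shows "eventually (\<lambda>n. norm (l - a) < norm (g n - a) + e) F"
proof -
  obtain h where h: "bounded_linear h" "\<forall>u. h u \<le> norm u" "h (l - a) = norm (l - a)"
    using norming_functional by blast
  have "((\<lambda>n. h (g n - a)) \<longlongrightarrow> norm (l - a)) F"
    using tendsto_diff[OF limitin_weak_topology_functional[OF lim h(1)] tendsto_const[of "h a"]]
    by (simp only: linear_diff[OF bounded_linear.linear[OF h(1)], symmetric] h(3))
  then have "eventually (\<lambda>n. norm (l - a) - e < h (g n - a)) F"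
    using e by (intro order_tendstoD(1)) auto
  then show ?thesis
    by eventually_elim (use h(2) in \<open>smt (verit)\<close>)
qed

section \<open>Convex monotone functions on the orthant\<close>

definition dist_vec :: "nat \<Rightarrow> (nat \<Rightarrow> 'a::real_normed_vector) \<Rightarrow> 'a \<Rightarrow> nat \<Rightarrow> real" where
  "dist_vec N x y = (\<lambda>i. if i < N then norm (y - x i) else 0)"

definition const_vec :: "nat \<Rightarrow> real \<Rightarrow> nat \<Rightarrow> real" where
  "const_vec N t = (\<lambda>i. if i < N then t else 0)"

lemma r_f_dist_vec: "r_f f N x y = f (dist_vec N x y)"
  unfolding r_f_def dist_vec_def ..

lemma dist_vec_nonneg_orthant [simp]: "dist_vec N x y \<in> nonneg_orthant N"
  unfolding dist_vec_def nonneg_orthant_def by simp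

lemma const_vec_nonneg_orthant [simp]: "0 \<le> t \<Longrightarrow> const_vec N t \<in> nonneg_orthant N"
  unfolding const_vec_def nonneg_orthant_def by simp

lemma cwm_nonneg: "cwm N f \<Longrightarrow> a \<in> nonneg_orthant N \<Longrightarrow> 0 \<le> f a"
  unfolding cwm_def by blast

lemma cwm_mono:
  "cwm N f \<Longrightarrow> a \<in> nonneg_orthant N \<Longrightarrow> b \<in> nonneg_orthant N \<Longrightarrow> (\<And>i. i < N \<Longrightarrow> a i \<le> b i)
    \<Longrightarrow> f a \<le> f b"
  unfolding cwm_def by blast

lemma cwm_convex:
  "cwm N f \<Longrightarrow> a \<in> nonneg_orthant N \<Longrightarrow> b \<in> nonneg_orthant N \<Longrightarrow> 0 \<le> t \<Longrightarrow> t \<le> 1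
    \<Longrightarrow> f (\<lambda>i. t * a i + (1 - t) * b i) \<le> t * f a + (1 - t) * f b"
  unfolding cwm_def by blast

lemma cwm_strict_mono:
  "cwm N f \<Longrightarrow> a \<in> nonneg_orthant N \<Longrightarrow> b \<in> nonneg_orthant N \<Longrightarrow> (\<And>i. i < N \<Longrightarrow> a i < b i)
    \<Longrightarrow> f a < f b"
  unfolding cwm_def by blast

lemma cwm_le_add_shift:
  assumes f: "cwm N f" and a: "a \<in> nonneg_orthant N" and b: "b \<in> nonneg_orthant N"
    and d: "0 \<le> d" "d \<le> 1" and ab: "\<And>i. i < N \<Longrightarrow> a i \<le> b i + d"
  shows "f a \<le> f b + d * f (\<lambda>i. if i < N then a i + 1 else 0)"
proof -
  \<comment> \<open>convexity along the segment from \<open>a'\<close> to \<open>a' + 1\<close>, where \<open>a' = (a - d)\<^sup>+ \<le> b\<close>\<close>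
  define a' where "a' i = (if i < N then max (a i - d) 0 else 0)" for i
  define a'1 where "a'1 i = (if i < N then a' i + 1 else 0)" for i
  define a1 where "a1 i = (if i < N then a i + 1 else 0)" for i
  have a_nonneg: "0 \<le> a i" for i using a unfolding nonneg_orthant_def by (cases "i < N") auto
  have orth: "a' \<in> nonneg_orthant N" "a'1 \<in> nonneg_orthant N" "a1 \<in> nonneg_orthant N"
    unfolding nonneg_orthant_def a'_def a'1_def a1_def using a_nonneg by auto
  have "f a \<le> f (\<lambda>i. d * a'1 i + (1 - d) * a' i)"
    using a orth d by (intro cwm_mono[OF f]) (auto simp: nonneg_orthant_def a'_def a'1_def algebra_simps)
  also have "\<dots> \<le> d * f a'1 + (1 - d) * f a'"
    using cwm_convex[OF f orth(2,1) d] .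
  also have "\<dots> \<le> d * f a1 + f b"
  proof (rule add_mono)
    show "d * f a'1 \<le> d * f a1"
      using orth a_nonneg d by (intro mult_left_mono cwm_mono[OF f]) (auto simp: a'_def a'1_def a1_def)
    have "a i - d \<le> b i" if "i < N" for i using ab[OF that] by simp
    then have "f a' \<le> f b"
      using orth b by (intro cwm_mono[OF f]) (auto simp: a'_def nonneg_orthant_def)
    then show "(1 - d) * f a' \<le> f b"
      using mult_left_le_one_le[OF cwm_nonneg[OF f orth(1)], of "1 - d"] d by linarith
  qed
  finally show ?thesis unfolding a1_def by simp
qed

lemma cwm_linear_growth:
  assumes f: "cwm N f" and N: "N \<ge> 1"
  shows "\<exists>m>0. \<forall>t\<ge>1. \<forall>a\<in>nonneg_orthant N. (\<forall>i<N. t \<le> a i) \<longrightarrow> t * m \<le> f a"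
proof -
  define m where "m = f (const_vec N 1) - f (const_vec N 0)"
  have "m > 0"
    unfolding m_def using N cwm_strict_mono[OF f const_vec_nonneg_orthant const_vec_nonneg_orthant, of 0 1]
    by (simp add: const_vec_def)
  moreover have "t * m \<le> f a"
    if t: "t \<ge> 1" and a: "a \<in> nonneg_orthant N" "\<forall>i<N. t \<le> a i" for t a
  proof -
    have "(\<lambda>i. (1 / t) * const_vec N t i + (1 - 1 / t) * const_vec N 0 i) = const_vec N 1"
      using t by (auto simp: const_vec_def)
    then have "f (const_vec N 1) \<le> (1 / t) * f (const_vec N t) + (1 - 1 / t) * f (const_vec N 0)"
      using cwm_convex[OF f, of "const_vec N t" "const_vec N 0" "1 / t"] t by simp
    then have "t * m \<le> f (const_vec N t) - f (const_vec N 0)"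
      using t unfolding m_def by (simp add: field_simps)
    moreover have "f (const_vec N t) \<le> f a"
      using a t cwm_mono[OF f const_vec_nonneg_orthant[of t N] a(1)] by (simp add: const_vec_def)
    moreover have "0 \<le> f (const_vec N 0)" by (simp add: cwm_nonneg[OF f])
    ultimately show ?thesis by linarith
  qed
  ultimately show ?thesis by blast
qed

section \<open>Radii and centres\<close>

lemma r_f_nonneg: "cwm N f \<Longrightarrow> 0 \<le> r_f f N x y"
  by (simp add: r_f_dist_vec cwm_nonneg)

lemma rad_f_le_r_f: "cwm N f \<Longrightarrow> y \<in> Y \<Longrightarrow> rad_f Y f N x \<le> r_f f N x y"
  unfolding rad_f_def by (rule cINF_lower) (auto intro: r_f_nonneg simp: bdd_below_def)

lemma rad_f_less_r_f:
  "cwm N f \<Longrightarrow> Y \<noteq> {} \<Longrightarrow> rad_f Y f N x < c \<Longrightarrow> \<exists>y\<in>Y. r_f f N x y < c"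
  unfolding rad_f_def by (subst (asm) cINF_less_iff) (auto intro: r_f_nonneg simp: bdd_below_def)

lemma r_f_le_const_vec:
  assumes f: "cwm N f" and y: "\<And>i. i < N \<Longrightarrow> norm (y - x i) \<le> t"
  shows "r_f f N x y \<le> f (const_vec N t)"
proof -
  have "const_vec N t \<in> nonneg_orthant N"
    using y unfolding const_vec_def nonneg_orthant_def by (auto intro: order_trans[OF norm_ge_zero])
  from cwm_mono[OF f dist_vec_nonneg_orthant[of N x y] this] show ?thesis
    unfolding r_f_dist_vec using y by (simp add: dist_vec_def const_vec_def)
qed

lemma r_f_perturb:
  assumes f: "cwm N f" and d: "0 \<le> d" "d \<le> 1"
    and x: "\<And>i. i < N \<Longrightarrow> norm (x i - x' i) \<le> d" and t: "\<And>i. i < N \<Longrightarrow> norm (y - x' i) + 1 \<le> t"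
  shows "r_f f N x' y \<le> r_f f N x y + d * f (const_vec N t)"
proof -
  have "dist_vec N x' y i \<le> dist_vec N x y i + d" if "i < N" for i
    using norm_triangle_ineq[of "y - x i" "x i - x' i"] x[OF that] that
    by (simp add: dist_vec_def)
  then have "r_f f N x' y \<le> r_f f N x y + d * f (\<lambda>i. if i < N then dist_vec N x' y i + 1 else 0)"
    unfolding r_f_dist_vec by (rule cwm_le_add_shift[OF f dist_vec_nonneg_orthant dist_vec_nonneg_orthant d])
  also have "f (\<lambda>i. if i < N then dist_vec N x' y i + 1 else 0) \<le> f (const_vec N t)"
  proof (rule cwm_mono[OF f])
    show "(\<lambda>i. if i < N then dist_vec N x' y i + 1 else 0) \<in> nonneg_orthant N"
      by (simp add: nonneg_orthant_def dist_vec_def)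
    have "0 \<le> t" if "i < N" for i
      using t[OF that] norm_ge_zero[of "y - x' i"] by linarith
    then show "const_vec N t \<in> nonneg_orthant N"
      unfolding const_vec_def nonneg_orthant_def by auto
    show "(if i < N then dist_vec N x' y i + 1 else 0) \<le> const_vec N t i" if "i < N" for i
      using t[OF that] that by (simp add: dist_vec_def const_vec_def)
  qed
  finally show ?thesis using d by (simp add: mult_left_mono)
qed

lemma r_f_coercive:
  assumes f: "cwm N f" and N: "N \<ge> 1"
  shows "\<exists>m>0. \<forall>K (x :: nat \<Rightarrow> 'a::real_normed_vector) y.
           (\<forall>i<N. norm (x i) \<le> K) \<longrightarrow> norm y \<le> K + 1 + r_f f N x y / m"
proof -
  obtain m where m: "m > 0" "\<forall>t\<ge>1. \<forall>a\<in>nonneg_orthant N. (\<forall>i<N. t \<le> a i) \<longrightarrow> t * m \<le> f a"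
    using cwm_linear_growth[OF f N] by blast
  have "norm y \<le> K + 1 + r_f f N x y / m"
    if x: "\<forall>i<N. norm (x i) \<le> K" for K and x :: "nat \<Rightarrow> 'a" and y
  proof (cases "norm y - K \<ge> 1")
    case True
    have "norm y - K \<le> dist_vec N x y i" if "i < N" for i
      using x[rule_format, OF that] that norm_triangle_ineq2[of y "x i"] by (simp add: dist_vec_def)
    then have "(norm y - K) * m \<le> r_f f N x y"
      using m(2) True unfolding r_f_dist_vec by simp
    then have "norm y - K \<le> r_f f N x y / m" using m(1) by (simp add: pos_le_divide_eq)
    then show ?thesis by simp
  next
    case False
    moreover have "0 \<le> r_f f N x y / m" using r_f_nonneg[OF f, of x y] m(1) by simp
    ultimately show ?thesis by simp
  qed
  with m(1) show ?thesis by blast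
qed

lemma Cent_f_bounded:
  fixes Y :: "'a::real_normed_vector set"
  assumes f: "cwm N f" "N \<ge> 1" and Y: "Y \<noteq> {}"
  shows "\<exists>B. \<forall>x y. (\<forall>i<N. norm (x i) \<le> K) \<longrightarrow> y \<in> Cent_f Y f N x \<longrightarrow> norm y \<le> B"
proof -
  obtain m where m: "m > 0"
    "\<forall>K (x :: nat \<Rightarrow> 'a) y. (\<forall>i<N. norm (x i) \<le> K) \<longrightarrow> norm y \<le> K + 1 + r_f f N x y / m"
    using r_f_coercive[OF f] by blast
  obtain y0 where y0: "y0 \<in> Y" using Y by blast
  have "norm y \<le> K + 1 + f (const_vec N (norm y0 + K)) / m"
    if x: "\<forall>i<N. norm (x i) \<le> K" and y: "y \<in> Cent_f Y f N x" for x y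
  proof -
    have "r_f f N x y = rad_f Y f N x" using y unfolding Cent_f_def by simp
    also have "\<dots> \<le> r_f f N x y0" by (rule rad_f_le_r_f[OF f(1) y0])
    also have "\<dots> \<le> f (const_vec N (norm y0 + K))"
    proof (rule r_f_le_const_vec[OF f(1)])
      show "norm (y0 - x i) \<le> norm y0 + K" if "i < N" for i
        using x[rule_format, OF that] norm_triangle_ineq4[of y0 "x i"] by simp
    qed
    finally have "r_f f N x y / m \<le> f (const_vec N (norm y0 + K)) / m"
      using m(1) by (simp add: divide_right_mono)
    moreover have "norm y \<le> K + 1 + r_f f N x y / m" using m(2) x by blast
    ultimately show ?thesis by linarith
  qed
  then show ?thesis by blast
qed

lemma weak_limit_r_f_lower:
  assumes f: "cwm N f" and lim: "limitin weak_topology g l F" and e: "e > 0"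
  shows "eventually (\<lambda>n. r_f f N x l < r_f f N x (g n) + e) F"
proof -
  define C where "C = f (\<lambda>i. if i < N then dist_vec N x l i + 1 else 0)"
  have "0 \<le> C"
    unfolding C_def by (rule cwm_nonneg[OF f]) (simp add: nonneg_orthant_def dist_vec_def)
  define \<epsilon> where "\<epsilon> = min 1 (e / (C + 1))"
  have \<epsilon>: "0 < \<epsilon>" "\<epsilon> \<le> 1" "\<epsilon> * (C + 1) \<le> e"
    unfolding \<epsilon>_def using e \<open>0 \<le> C\<close> by (auto simp: min_def pos_le_divide_eq)
  have "eventually (\<lambda>n. \<forall>i\<in>{..<N}. norm (l - x i) < norm (g n - x i) + \<epsilon>) F"
    using weak_limit_norm_lower[OF lim \<epsilon>(1)] by (simp add: eventually_ball_finite)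
  then show ?thesis
  proof (rule eventually_mono)
    fix n assume "\<forall>i\<in>{..<N}. norm (l - x i) < norm (g n - x i) + \<epsilon>"
    then have "r_f f N x l \<le> r_f f N x (g n) + \<epsilon> * C"
      unfolding r_f_dist_vec C_def using \<epsilon>(1,2)
      by (intro cwm_le_add_shift[OF f dist_vec_nonneg_orthant dist_vec_nonneg_orthant])
        (auto simp: dist_vec_def less_imp_le)
    then show "r_f f N x l < r_f f N x (g n) + e" using \<epsilon> by (simp add: algebra_simps)
  qed
qed

lemma weak_limit_minimising_in_Cent_f:
  assumes f: "cwm N f" and Y: "subspace Y" "closed Y" and g: "\<And>n. g n \<in> Y"
    and min: "(\<lambda>n. r_f f N x (g n)) \<longlonglongrightarrow> rad_f Y f N x"
    and lim: "limitin weak_topology g l sequentially"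
  shows "l \<in> Cent_f Y f N x"
proof -
  have "l \<in> Y"
    using weak_limit_in_closed_subspace[OF Y sequentially_bot _ lim] g by simp
  moreover have "r_f f N x l \<le> rad_f Y f N x"
  proof (rule field_le_epsilon)
    fix e :: real assume "0 < e"
    have "eventually (\<lambda>n. r_f f N x l < r_f f N x (g n) + e / 2) sequentially"
      using weak_limit_r_f_lower[OF f lim] \<open>0 < e\<close> by simp
    moreover have "eventually (\<lambda>n. r_f f N x (g n) < rad_f Y f N x + e / 2) sequentially"
      using min \<open>0 < e\<close> by (intro order_tendstoD(2)) auto
    ultimately have "eventually (\<lambda>n. r_f f N x l < rad_f Y f N x + e) sequentially"
      by eventually_elim linarith
    then show "r_f f N x l \<le> rad_f Y f N x + e"
      using eventually_happens[of _ sequentially] by auto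
  qed
  ultimately show ?thesis
    using rad_f_le_r_f[OF f \<open>l \<in> Y\<close>, where x = x] unfolding Cent_f_def by simp
qed

lemma r_f_centre_of_perturbation_le:
  assumes f: "cwm N f" and d: "0 \<le> d" "d \<le> 1" and X: "\<And>i. i < N \<Longrightarrow> norm (x i - X i) \<le> d"
    and c: "c \<in> Cent_f Y f N X" and z: "z \<in> Y"
    and s: "\<And>i. i < N \<Longrightarrow> norm (c - x i) + 1 \<le> s" and t: "\<And>i. i < N \<Longrightarrow> norm (z - X i) + 1 \<le> t"
  shows "r_f f N x c \<le> r_f f N x z + d * (f (const_vec N s) + f (const_vec N t))"
proof -
  have "r_f f N x c \<le> r_f f N X c + d * f (const_vec N s)"
    using X by (intro r_f_perturb[OF f d _ s]) (simp add: norm_minus_commute)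
  also have "r_f f N X c \<le> r_f f N X z"
    using c rad_f_le_r_f[OF f z] unfolding Cent_f_def by simp
  also have "\<dots> \<le> r_f f N x z + d * f (const_vec N t)"
    by (rule r_f_perturb[OF f d X t])
  finally show ?thesis by (simp add: algebra_simps)
qed

lemma Cent_f_perturbation_minimising:
  fixes x :: "nat \<Rightarrow> 'a::real_normed_vector" and X :: "nat \<Rightarrow> nat \<Rightarrow> 'a"
  assumes f: "cwm N f" "N \<ge> 1" and Y: "Y \<noteq> {}"
    and X: "\<And>n i. i < N \<Longrightarrow> norm (x i - X n i) \<le> \<delta> n" and \<delta>: "\<And>n. \<delta> n \<le> 1" "\<delta> \<longlonglongrightarrow> 0"
    and y: "\<And>n. y n \<in> Cent_f Y f N (X n)"
  shows "(\<lambda>n. r_f f N x (y n)) \<longlonglongrightarrow> rad_f Y f N x"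
proof (rule order_tendstoI)
  fix a assume "a < rad_f Y f N x"
  moreover have "rad_f Y f N x \<le> r_f f N x (y n)" for n
    using y[of n] rad_f_le_r_f[OF f(1)] unfolding Cent_f_def by blast
  ultimately show "eventually (\<lambda>n. a < r_f f N x (y n)) sequentially"
    by (auto intro: always_eventually less_le_trans)
next
  fix a assume "rad_f Y f N x < a"
  then obtain z where z: "z \<in> Y" "r_f f N x z < a"
    using rad_f_less_r_f[OF f(1) Y] by blast
  define K where "K = Max (insert 0 ((\<lambda>i. norm (x i)) ` {..<N}))"
  have K: "norm (x i) \<le> K" if "i < N" for i unfolding K_def using that by simp
  have \<delta>_nonneg: "0 \<le> \<delta> n" for n using X[of 0 n] f(2) by (simp add: order_trans[OF norm_ge_zero])
  have XK: "norm (X n i) \<le> K + 1" if "i < N" for n i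
    using norm_triangle_ineq4[of "x i" "x i - X n i"] K[OF that] X[OF that, of n] \<delta>(1)[of n] by simp
  obtain B where B: "norm (y n) \<le> B" for n
    using Cent_f_bounded[OF f Y, of "K + 1"] XK y by blast
  define C where "C = f (const_vec N (B + K + 1)) + f (const_vec N (norm z + K + 2))"
  have upper: "r_f f N x (y n) \<le> r_f f N x z + \<delta> n * C" for n
    unfolding C_def
  proof (rule r_f_centre_of_perturbation_le[OF f(1) \<delta>_nonneg \<delta>(1) X y z(1)])
    show "norm (y n - x i) + 1 \<le> B + K + 1" if "i < N" for i
      using norm_triangle_ineq4[of "y n" "x i"] B[of n] K[OF that] by simp
    show "norm (z - X n i) + 1 \<le> norm z + K + 2" if "i < N" for i
      using norm_triangle_ineq4[of z "X n i"] XK[OF that, of n] by simp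
  qed
  have "eventually (\<lambda>n. \<delta> n * C < a - r_f f N x z) sequentially"
    using tendsto_mult_left_zero[OF \<delta>(2)] z(2) by (intro order_tendstoD(2)) auto
  then show "eventually (\<lambda>n. r_f f N x (y n) < a) sequentially"
    by eventually_elim (use upper in \<open>smt (verit)\<close>)
qed

theorem theorem4p5:
  fixes \<tau> :: "'a::banach topology" and Y :: "'a set"
  assumes tau: "\<tau> = euclidean \<or> \<tau> = weak_topology"
    and Y: "subspace Y" "closed Y"
    and sacp: "SACP_cwm \<tau> Y"
    and N: "N \<ge> 1"
    and f: "cwm N f"
  shows "\<forall>x :: nat \<Rightarrow> 'a. inj_on x {..<N} \<longrightarrow>
           (\<forall>W. openin \<tau> W \<and> Cent_f Y f N x \<subseteq> W \<longrightarrow>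
              (\<exists>e>0. \<forall>x' :: nat \<Rightarrow> 'a. inj_on x' {..<N} \<and> (\<forall>i<N. norm (x i - x' i) < e) \<longrightarrow>
                 Cent_f Y f N x' \<subseteq> W))"
proof (intro allI impI, elim conjE)
  fix x :: "nat \<Rightarrow> 'a" and W
  assume x: "inj_on x {..<N}" and W: "openin \<tau> W" "Cent_f Y f N x \<subseteq> W"
  show "\<exists>e>0. \<forall>x'. inj_on x' {..<N} \<and> (\<forall>i<N. norm (x i - x' i) < e) \<longrightarrow> Cent_f Y f N x' \<subseteq> W"
  proof (rule ccontr)
    assume "\<not> ?thesis"
    then have "\<forall>n. \<exists>X y. (\<forall>i<N. norm (x i - X i) \<le> inverse (Suc n)) \<and> y \<in> Cent_f Y f N X \<and> y \<notin> W"
      by (metis less_imp_le of_nat_0_less_iff positive_imp_inverse_positive subsetI zero_less_Suc)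
    then obtain X y where X: "\<And>n i. i < N \<Longrightarrow> norm (x i - X n i) \<le> inverse (Suc n)"
      and y: "\<And>n. y n \<in> Cent_f Y f N (X n)" "\<And>n. y n \<notin> W"
      by metis
    have min: "(\<lambda>n. r_f f N x (y n)) \<longlonglongrightarrow> rad_f Y f N x"
      using subspace_0[OF Y(1)]
      by (intro Cent_f_perturbation_minimising[OF f N _ X _ LIMSEQ_inverse_real_of_nat y(1)])
        (auto simp: inverse_le_1_iff)
    moreover have y_Y: "\<forall>n. y n \<in> Y" using y(1) unfolding Cent_f_def by blast
    ultimately obtain r l where r: "strict_mono r" and lim: "limitin \<tau> (y \<circ> r) l sequentially"
      using sacp N x f unfolding SACP_cwm_def by blast
    have "limitin weak_topology (y \<circ> r) l sequentially"
      using tau lim limitin_weak_topology_if_tendsto by auto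
    then have "l \<in> Cent_f Y f N x"
      using weak_limit_minimising_in_Cent_f[OF f Y, of "y \<circ> r"] LIMSEQ_subseq_LIMSEQ[OF min r] y_Y
      by (simp add: o_def)
    then have "eventually (\<lambda>n. y (r n) \<in> W) sequentially"
      using W lim unfolding limitin_def by auto
    then show False using y(2) eventually_happens[of _ sequentially] by auto
  qed
qed

end
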